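(* For integers $0\le k\le n$, $$\frac{[n]!}{[k]!\cdot F^k([n-k]!)}=\sum_{S}\mathrm{wt}(S),$$ where the sum runs over all $k$-element subsets $S$ of $\{1,\ldots,n\}$.
   Context: Work in $\mathbb{Q}(x_1,x_2,\ldots)$ with the field endomorphism $F$ given by $F(x_i)=x_{i+1}$. Define $[n]:=x_1+\cdots+x_n$, $[0]!:=1$, $[n]!:=[n]\cdot F([n-1]!)=\prod_{j=0}^{n-1}F^j[n-j]$. For a $k$-element set $S=\{i_1>i_2>\cdots>i_k\}$ of positive integers, $\mathrm{wt}(S):=\frac{\prod_{j=1}^k F^{i_j-1}[j]}{[k]!}$, with $\mathrm{wt}(\emptyset)=1$. *)

theory Defs
  imports Complex_Main "HOL-Library.Poly_Mapping" "HOL-Computational_Algebra.Fraction_Field"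
begin

text \<open>Polynomials over the rationals in the variables x_0, x_1, x_2, ...
  (a monomial is a finitely supported exponent map nat to nat); only x_1, x_2, ... are used.\<close>

type_synonym mpoly = "(nat \<Rightarrow>\<^sub>0 nat) \<Rightarrow>\<^sub>0 rat"
type_synonym ratfun = "mpoly fract"

definition X :: "nat \<Rightarrow> ratfun" where
  "X i = Fract (Poly_Mapping.single (Poly_Mapping.single i 1) 1) 1"

definition shift_mon :: "(nat \<Rightarrow>\<^sub>0 nat) \<Rightarrow> (nat \<Rightarrow>\<^sub>0 nat)" where
  "shift_mon m = (\<Sum>i\<in>Poly_Mapping.keys m. Poly_Mapping.single (Suc i) (Poly_Mapping.lookup m i))"

definition F_poly :: "mpoly \<Rightarrow> mpoly" where
  "F_poly p = (\<Sum>m\<in>Poly_Mapping.keys p. Poly_Mapping.single (shift_mon m) (Poly_Mapping.lookup p m))"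

definition F :: "ratfun \<Rightarrow> ratfun" where
  "F q = (SOME r. \<exists>a b. b \<noteq> 0 \<and> q = Fract a b \<and> r = Fract (F_poly a) (F_poly b))"

definition bracket :: "nat \<Rightarrow> ratfun" where
  "bracket n = (\<Sum>i = 1..n. X i)"

fun qfact :: "nat \<Rightarrow> ratfun" where
  "qfact 0 = 1"
| "qfact (Suc n) = bracket (Suc n) * F (qfact n)"

text \<open>wt(S) for S = {i_1 > ... > i_k}: the element i of S is i_j where j is the number
  of elements of S that are at least i.\<close>
definition wt :: "nat set \<Rightarrow> ratfun" where
  "wt S = (\<Prod>i\<in>S. (F ^^ (i - 1)) (bracket (card {i'\<in>S. i \<le> i'}))) / qfact (card S)"

end

theory Submission imports Defs begin

text \<open>Let \<open>W(n, k)\<close> be the sum of the numerators of \<open>wt(S)\<close> over the \<open>k\<close>-subsets \<open>S\<close> of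
  \<open>{1..n}\<close>. Splitting according to whether \<open>1 \<in> S\<close> and shifting the remaining elements down
  by one gives the Pascal-type recurrence \<open>W(n+1, k+1) = F W(n, k+1) + [k+1] F W(n, k)\<close>.
  The quotient \<open>[n]! / F\<^sup>k([n-k]!)\<close> satisfies the same recurrence, because
  \<open>[k] + F\<^sup>k[n-k+1] = [n+1]\<close>, so both agree by induction on \<open>n\<close>.\<close>

lemma lookup_shift_mon:
  "Poly_Mapping.lookup (shift_mon m) j = (case j of 0 \<Rightarrow> 0 | Suc i \<Rightarrow> Poly_Mapping.lookup m i)"
proof -
  have "Poly_Mapping.lookup (shift_mon m) j
      = (\<Sum>i\<in>Poly_Mapping.keys m. if i = j - 1 \<and> j \<noteq> 0 then Poly_Mapping.lookup m i else 0)"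
    unfolding shift_mon_def lookup_sum lookup_single when_def
    by (intro sum.cong) auto
  then show ?thesis
    by (simp add: sum.delta in_keys_iff split: nat.split)
qed

lemma shift_mon_add: "shift_mon (m + m') = shift_mon m + shift_mon m'"
  by (rule poly_mapping_eqI) (simp add: lookup_shift_mon lookup_add split: nat.split)

lemma shift_mon_zero [simp]: "shift_mon 0 = 0"
  by (rule poly_mapping_eqI) (simp add: lookup_shift_mon split: nat.split)

lemma shift_mon_single: "shift_mon (Poly_Mapping.single i 1) = Poly_Mapping.single (Suc i) 1"
  by (rule poly_mapping_eqI) (simp add: lookup_shift_mon lookup_single when_def split: nat.split)

lemma inj_shift_mon: "inj shift_mon"
proof (rule injI)
  fix m m' assume "shift_mon m = shift_mon m'"
  then have "Poly_Mapping.lookup (shift_mon m) (Suc i) = Poly_Mapping.lookup (shift_mon m') (Suc i)" for i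
    by simp
  then show "m = m'"
    by (intro poly_mapping_eqI) (simp add: lookup_shift_mon)
qed

lemma lookup_F_poly_shift_mon: "Poly_Mapping.lookup (F_poly p) (shift_mon m) = Poly_Mapping.lookup p m"
proof -
  have "Poly_Mapping.lookup (F_poly p) (shift_mon m)
      = (\<Sum>m'\<in>Poly_Mapping.keys p. if m' = m then Poly_Mapping.lookup p m' else 0)"
    unfolding F_poly_def
    by (simp add: lookup_sum lookup_single when_def inj_eq[OF inj_shift_mon])
  then show ?thesis
    by (simp add: sum.delta in_keys_iff)
qed

lemma lookup_F_poly_notin_range: "m \<notin> range shift_mon \<Longrightarrow> Poly_Mapping.lookup (F_poly p) m = 0"
  unfolding F_poly_def by (auto simp: lookup_sum lookup_single when_def intro!: sum.neutral)

lemma F_poly_add: "F_poly (p + q) = F_poly p + F_poly q"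
proof (rule poly_mapping_eqI)
  fix m
  show "Poly_Mapping.lookup (F_poly (p + q)) m = Poly_Mapping.lookup (F_poly p + F_poly q) m"
    by (cases "m \<in> range shift_mon")
      (auto simp: lookup_add lookup_F_poly_shift_mon lookup_F_poly_notin_range)
qed

lemma F_poly_zero [simp]: "F_poly 0 = 0"
  by (simp add: F_poly_def)

lemma F_poly_sum: "F_poly (sum f A) = (\<Sum>a\<in>A. F_poly (f a))"
  by (induction A rule: infinite_finite_induct) (simp_all add: F_poly_add)

lemma F_poly_single: "F_poly (Poly_Mapping.single m c) = Poly_Mapping.single (shift_mon m) c"
  by (cases "c = 0") (simp_all add: F_poly_def)

lemma mpoly_sum_monomials:
  "(p :: mpoly) = (\<Sum>m\<in>Poly_Mapping.keys p. Poly_Mapping.single m (Poly_Mapping.lookup p m))"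
  by (rule poly_mapping_eqI) (simp add: lookup_sum lookup_single when_def sum.delta in_keys_iff)

text \<open>Both sides are bilinear, so it suffices to compare them on pairs of monomials, where
  \<^const>\<open>shift_mon\<close> is additive.\<close>
lemma F_poly_mult: "F_poly (p * q) = F_poly p * F_poly q"
proof -
  let ?mon = "\<lambda>(p::mpoly) m. Poly_Mapping.single m (Poly_Mapping.lookup p m)"
  have "p * q = (\<Sum>m\<in>Poly_Mapping.keys p. \<Sum>m'\<in>Poly_Mapping.keys q. ?mon p m * ?mon q m')"
    by (subst (1 2) mpoly_sum_monomials) (simp add: sum_product)
  moreover have "F_poly p * F_poly q
      = (\<Sum>m\<in>Poly_Mapping.keys p. \<Sum>m'\<in>Poly_Mapping.keys q. F_poly (?mon p m) * F_poly (?mon q m'))"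
    by (subst (1 2) mpoly_sum_monomials) (simp add: F_poly_sum sum_product)
  ultimately show ?thesis
    by (simp add: F_poly_sum F_poly_single mult_single shift_mon_add)
qed

lemma F_poly_one [simp]: "F_poly 1 = 1"
  by (metis F_poly_single shift_mon_zero single_one)

lemma F_poly_eq_0_iff [simp]: "F_poly p = 0 \<longleftrightarrow> p = 0"
  by (metis F_poly_zero lookup_F_poly_shift_mon lookup_zero poly_mapping_eqI)

lemma F_Fract: "b \<noteq> 0 \<Longrightarrow> F (Fract a b) = Fract (F_poly a) (F_poly b)"
  unfolding F_def
proof (rule someI2)
  assume "b \<noteq> 0"
  then show "\<exists>a' b'. b' \<noteq> 0 \<and> Fract a b = Fract a' b'
      \<and> Fract (F_poly a) (F_poly b) = Fract (F_poly a') (F_poly b')"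
    by blast
  fix r assume "\<exists>c d. d \<noteq> 0 \<and> Fract a b = Fract c d \<and> r = Fract (F_poly c) (F_poly d)"
  then obtain c d where "d \<noteq> 0" "Fract a b = Fract c d" "r = Fract (F_poly c) (F_poly d)"
    by blast
  with \<open>b \<noteq> 0\<close> have "a * d = c * b"
    by (simp add: eq_fract)
  then have "F_poly a * F_poly d = F_poly c * F_poly b"
    by (metis F_poly_mult)
  with \<open>b \<noteq> 0\<close> \<open>d \<noteq> 0\<close> \<open>r = _\<close> show "r = Fract (F_poly a) (F_poly b)"
    by (simp add: eq_fract)
qed

lemma F_add: "F (x + y) = F x + F y"
  by (cases x, cases y) (simp add: F_Fract F_poly_add F_poly_mult)

lemma F_mult: "F (x * y) = F x * F y"
  by (cases x, cases y) (simp add: F_Fract F_poly_mult)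

lemma F_one [simp]: "F 1 = 1"
  by (simp add: One_fract_def F_Fract)

lemma F_zero [simp]: "F 0 = 0"
  by (simp add: Zero_fract_def F_Fract)

lemma F_eq_0_iff [simp]: "F x = 0 \<longleftrightarrow> x = 0"
  by (cases x) (simp add: F_Fract eq_fract Zero_fract_def)

lemma F_X: "F (X i) = X (Suc i)"
  using shift_mon_single[of i] by (simp add: X_def F_Fract F_poly_single)

lemma F_sum: "F (sum f A) = (\<Sum>a\<in>A. F (f a))"
  by (induction A rule: infinite_finite_induct) (simp_all add: F_add)

lemma F_prod: "F (prod f A) = (\<Prod>a\<in>A. F (f a))"
  by (induction A rule: infinite_finite_induct) (simp_all add: F_mult)

lemma funpow_F_mult: "(F ^^ j) (x * y) = (F ^^ j) x * (F ^^ j) y"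
  by (induction j) (simp_all add: F_mult)

lemma funpow_F_one [simp]: "(F ^^ j) 1 = 1"
  by (induction j) simp_all

lemma funpow_F_eq_0_iff [simp]: "(F ^^ j) x = 0 \<longleftrightarrow> x = 0"
  by (induction j) simp_all

lemma funpow_F_bracket: "(F ^^ j) (bracket m) = (\<Sum>i = 1..m. X (i + j))"
proof -
  have "(F ^^ j) (X i) = X (i + j)" for i
    by (induction j) (simp_all add: F_X)
  moreover have "(F ^^ j) (sum f A) = (\<Sum>a\<in>A. (F ^^ j) (f a))" for f :: "nat \<Rightarrow> ratfun" and A
    by (induction j) (simp_all add: F_sum)
  ultimately show ?thesis
    by (simp add: bracket_def)
qed

lemma bracket_add_funpow_F_bracket: "bracket k + (F ^^ k) (bracket m) = bracket (k + m)"
  unfolding funpow_F_bracket by (induction m) (simp_all add: bracket_def algebra_simps)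

lemma bracket_eq_Fract:
  "bracket n = Fract (\<Sum>i = 1..n. Poly_Mapping.single (Poly_Mapping.single i 1) 1) 1"
  by (induction n) (simp_all add: bracket_def X_def Zero_fract_def)

lemma bracket_nonzero: "n \<noteq> 0 \<Longrightarrow> bracket n \<noteq> 0"
proof -
  assume "n \<noteq> 0"
  let ?p = "\<Sum>i = 1..n. Poly_Mapping.single (Poly_Mapping.single i 1) 1 :: mpoly"
  have "Poly_Mapping.single i (1::nat) = Poly_Mapping.single n 1 \<longleftrightarrow> i = n" for i
    by (metis lookup_single_eq lookup_single_not_eq one_neq_zero)
  then have "Poly_Mapping.lookup ?p (Poly_Mapping.single n 1) = (\<Sum>i = 1..n. if i = n then 1 else 0)"
    by (simp add: lookup_sum lookup_single when_def)
  also have "\<dots> = 1"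
    using \<open>n \<noteq> 0\<close> by simp
  finally have "?p \<noteq> 0"
    by auto
  then show ?thesis
    by (simp add: bracket_eq_Fract eq_fract Zero_fract_def)
qed

lemma qfact_nonzero: "qfact n \<noteq> 0"
  by (induction n) (simp_all add: bracket_nonzero)

definition wt_num :: "nat set \<Rightarrow> ratfun" where
  "wt_num S = (\<Prod>i\<in>S. (F ^^ (i - 1)) (bracket (card {i'\<in>S. i \<le> i'})))"

definition wt_sum :: "nat \<Rightarrow> nat \<Rightarrow> ratfun" where
  "wt_sum n k = (\<Sum>S | S \<subseteq> {1..n} \<and> card S = k. wt_num S)"

lemma wt_num_image_Suc:
  assumes "0 \<notin> S"
  shows "wt_num (Suc ` S) = F (wt_num S)"
proof -
  have "(F ^^ (Suc i - 1)) (bracket (card {i'\<in>Suc ` S. Suc i \<le> i'}))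
      = F ((F ^^ (i - 1)) (bracket (card {i'\<in>S. i \<le> i'})))" if i: "i \<in> S" for i
  proof -
    obtain j where "i = Suc j"
      using i assms by (cases i) auto
    have "{i'\<in>Suc ` S. Suc i \<le> i'} = Suc ` {i'\<in>S. i \<le> i'}"
      by auto
    then have "card {i'\<in>Suc ` S. Suc i \<le> i'} = card {i'\<in>S. i \<le> i'}"
      by (simp add: card_image)
    then show ?thesis
      using \<open>i = Suc j\<close> by simp
  qed
  then show ?thesis
    unfolding wt_num_def by (simp add: prod.reindex F_prod)
qed

lemma wt_num_insert_1:
  assumes "0 \<notin> S" "finite S"
  shows "wt_num (insert 1 (Suc ` S)) = bracket (Suc (card S)) * F (wt_num S)"
proof -
  let ?S' = "insert 1 (Suc ` S)"
  have "1 \<notin> Suc ` S"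
    using assms(1) by auto
  have "{i'\<in>?S'. i \<le> i'} = {i'\<in>Suc ` S. i \<le> i'}" if "i \<in> Suc ` S" for i
    using that assms(1) by auto
  then have "wt_num ?S' = (F ^^ 0) (bracket (card {i'\<in>?S'. 1 \<le> i'})) * wt_num (Suc ` S)"
    unfolding wt_num_def using \<open>1 \<notin> Suc ` S\<close> \<open>finite S\<close> by (simp add: prod.insert)
  moreover have "{i'\<in>?S'. 1 \<le> i'} = ?S'"
    by auto
  moreover have "card ?S' = Suc (card S)"
    using \<open>1 \<notin> Suc ` S\<close> \<open>finite S\<close> by (simp add: card_image)
  ultimately show ?thesis
    using wt_num_image_Suc[OF assms(1)] by simp
qed

lemma subsets_image_Suc:
  "{S. S \<subseteq> Suc ` A \<and> card S = k} = (`) Suc ` {S. S \<subseteq> A \<and> card S = k}"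
proof (intro equalityI subsetI)
  fix S assume "S \<in> {S. S \<subseteq> Suc ` A \<and> card S = k}"
  then obtain T where "T \<subseteq> A" "S = Suc ` T" "card S = k"
    by (auto simp: subset_image_iff)
  then show "S \<in> (`) Suc ` {S. S \<subseteq> A \<and> card S = k}"
    by (simp add: card_image)
qed (auto simp: card_image)

lemma subsets_avoiding_1:
  "{S. S \<subseteq> {1..Suc n} \<and> 1 \<notin> S \<and> card S = k} = (`) Suc ` {S. S \<subseteq> {1..n} \<and> card S = k}"
proof -
  have "S \<subseteq> {1..Suc n} \<and> 1 \<notin> S \<longleftrightarrow> S \<subseteq> Suc ` {1..n}" for S
    by (auto simp: image_Suc_atLeastAtMost subset_iff Suc_le_eq le_less)
  then have "{S. S \<subseteq> {1..Suc n} \<and> 1 \<notin> S \<and> card S = k} = {S. S \<subseteq> Suc ` {1..n} \<and> card S = k}"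
    by blast
  then show ?thesis
    by (simp only: subsets_image_Suc)
qed

lemma subsets_containing:
  assumes "finite A" "a \<in> A"
  shows "{S. S \<subseteq> A \<and> a \<in> S \<and> card S = Suc k} = insert a ` {S. S \<subseteq> A \<and> a \<notin> S \<and> card S = k}"
proof (intro equalityI subsetI)
  fix S assume S: "S \<in> {S. S \<subseteq> A \<and> a \<in> S \<and> card S = Suc k}"
  then have "finite S"
    using assms finite_subset by blast
  with S have "S - {a} \<in> {S. S \<subseteq> A \<and> a \<notin> S \<and> card S = k}" "S = insert a (S - {a})"
    by auto
  then show "S \<in> insert a ` {S. S \<subseteq> A \<and> a \<notin> S \<and> card S = k}"
    by blast
qed (use assms finite_subset in \<open>auto simp: card_insert_if\<close>)

lemma inj_on_image_Suc: "inj_on ((`) Suc) \<S>"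
  by (rule inj_onI) (simp add: inj_image_eq_iff)

lemma wt_sum_Suc_Suc:
  "wt_sum (Suc n) (Suc k) = F (wt_sum n (Suc k)) + bracket (Suc k) * F (wt_sum n k)"
proof -
  let ?out = "{S. S \<subseteq> {1..Suc n} \<and> 1 \<notin> S \<and> card S = Suc k}"
  let ?in = "{S. S \<subseteq> {1..Suc n} \<and> 1 \<in> S \<and> card S = Suc k}"
  have "{S. S \<subseteq> {1..Suc n} \<and> card S = Suc k} = ?out \<union> ?in"
    by blast
  then have "wt_sum (Suc n) (Suc k) = sum wt_num ?out + sum wt_num ?in"
    unfolding wt_sum_def by (simp add: sum.union_disjoint disjoint_iff)
  moreover have "sum wt_num ?out = F (wt_sum n (Suc k))"
    unfolding subsets_avoiding_1 wt_sum_def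
    by (auto simp: sum.reindex inj_on_image_Suc F_sum intro!: sum.cong wt_num_image_Suc)
  moreover have "sum wt_num ?in = bracket (Suc k) * F (wt_sum n k)"
  proof -
    let ?out' = "{S. S \<subseteq> {1..Suc n} \<and> 1 \<notin> S \<and> card S = k}"
    have "inj_on (insert 1) ?out'"
      by (rule inj_onI) (metis (no_types, lifting) insert_ident mem_Collect_eq)
    then have "sum wt_num ?in = sum (\<lambda>S. wt_num (insert 1 S)) ?out'"
      by (simp add: subsets_containing sum.reindex)
    also have "\<dots> = (\<Sum>S | S \<subseteq> {1..n} \<and> card S = k. wt_num (insert 1 (Suc ` S)))"
      unfolding subsets_avoiding_1 by (simp add: sum.reindex inj_on_image_Suc)
    also have "\<dots> = (\<Sum>S | S \<subseteq> {1..n} \<and> card S = k. bracket (Suc k) * F (wt_num S))"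
    proof (intro sum.cong refl)
      fix S assume "S \<in> {S. S \<subseteq> {1..n} \<and> card S = k}"
      then have "0 \<notin> S" "finite S" "card S = k"
        using finite_subset by fastforce+
      then show "wt_num (insert 1 (Suc ` S)) = bracket (Suc k) * F (wt_num S)"
        using wt_num_insert_1 by blast
    qed
    finally show ?thesis
      by (simp add: wt_sum_def F_sum sum_distrib_left)
  qed
  ultimately show ?thesis
    by simp
qed

lemma wt_sum_0 [simp]: "wt_sum n 0 = 1"
proof -
  have "{S. S \<subseteq> {1..n} \<and> card S = 0} = {{}}"
    using finite_subset by fastforce
  then show ?thesis
    by (simp add: wt_sum_def wt_num_def)
qed

lemma wt_sum_eq_0: "n < k \<Longrightarrow> wt_sum n k = 0"
proof -
  assume "n < k"
  have "card S \<le> n" if "S \<subseteq> {1..n}" for S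
    using card_mono[OF _ that] by simp
  with \<open>n < k\<close> have "{S. S \<subseteq> {1..n} \<and> card S = k} = {}"
    by (auto simp: not_le[symmetric])
  then show ?thesis
    unfolding wt_sum_def by (metis sum.empty)
qed

lemma funpow_F_qfact_Suc:
  "(F ^^ k) (qfact (Suc m)) = (F ^^ k) (bracket (Suc m)) * F ((F ^^ k) (qfact m))"
  by (simp add: funpow_F_mult funpow_swap1)

lemma wt_sum_mult_funpow_F_qfact:
  "k \<le> n \<Longrightarrow> wt_sum n k * (F ^^ k) (qfact (n - k)) = qfact n"
proof (induction n arbitrary: k)
  case 0
  then show ?case
    by simp
next
  case (Suc n)
  show ?case
  proof (cases k)
    case 0
    then show ?thesis
      by simp
  next
    case (Suc k')
    consider "k' = n" | m where "n - k' = Suc m"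
      using Suc \<open>k \<le> Suc n\<close> by (metis Suc_diff_Suc le_SucE le_neq_implies_less Suc_le_mono)
    then show ?thesis
    proof cases
      case 1
      have "wt_sum n n = qfact n"
        using Suc.IH[of n] by simp
      then show ?thesis
        using \<open>k = Suc k'\<close> 1 by (simp add: wt_sum_Suc_Suc wt_sum_eq_0)
    next
      case (2 m)
      have "k \<le> n" "n - k = m" "k + m = n"
        using 2 \<open>k = Suc k'\<close> by auto
      then have IH_k: "F (wt_sum n k) * F ((F ^^ k) (qfact m)) = F (qfact n)"
        using Suc.IH[of k] by (simp flip: F_mult)
      have IH_k': "F (wt_sum n k') * (F ^^ k) (qfact (Suc m)) = F (qfact n)"
        using Suc.IH[of k'] 2 \<open>k \<le> n\<close> \<open>k = Suc k'\<close> by (simp del: qfact.simps flip: F_mult)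
      have "wt_sum (Suc n) k * (F ^^ k) (qfact (Suc n - k))
          = (F (wt_sum n k) + bracket k * F (wt_sum n k')) * (F ^^ k) (qfact (Suc m))"
        using 2 \<open>k = Suc k'\<close> by (simp add: wt_sum_Suc_Suc)
      also have "\<dots> = (F ^^ k) (bracket (Suc m)) * (F (wt_sum n k) * F ((F ^^ k) (qfact m)))
          + bracket k * (F (wt_sum n k') * (F ^^ k) (qfact (Suc m)))"
        unfolding funpow_F_qfact_Suc by (simp add: algebra_simps)
      also have "\<dots> = (bracket k + (F ^^ k) (bracket (Suc m))) * F (qfact n)"
        unfolding IH_k IH_k' by (simp add: algebra_simps)
      also have "\<dots> = qfact (Suc n)"
        using bracket_add_funpow_F_bracket[of k "Suc m"] \<open>k + m = n\<close> by simp
      finally show ?thesis .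
    qed
  qed
qed

theorem proposition4p2:
  fixes n k :: nat
  assumes "k \<le> n"
  shows "qfact n / (qfact k * (F ^^ k) (qfact (n - k)))
           = (\<Sum>S\<in>{S. S \<subseteq> {1..n} \<and> card S = k}. wt S)"
proof -
  have "(\<Sum>S\<in>{S. S \<subseteq> {1..n} \<and> card S = k}. wt S) = wt_sum n k / qfact k"
    unfolding wt_sum_def wt_def wt_num_def by (simp add: sum_divide_distrib)
  also have "\<dots> = qfact n / (qfact k * (F ^^ k) (qfact (n - k)))"
    using wt_sum_mult_funpow_F_qfact[OF assms] by (simp add: field_simps qfact_nonzero)
  finally show ?thesis ..
qed

end
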